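(* Let $F$ be the elementary cellular automaton with rule number 104. For every nonempty finite word $u\in\{0,1\}^*$, the deterministic communication complexity of $\textsc{SInv}_{F,u}$ restricted to inputs of length $n$ is bounded by a constant independent of $n$.
   Context: An elementary cellular automaton (ECA) with rule number $N\in\{0,\dots,255\}$ is the map $F:\{0,1\}^{\mathbb Z}\to\{0,1\}^{\mathbb Z}$ given by $F(x)_i=f(x_{i-1},x_i,x_{i+1})$. Here the local rule $f:\{0,1\}^3\to\{0,1\}$ is determined by $N=\sum_{a,b,c\in\{0,1\}}2^{4a+2b+c}f(a,b,c)$. For a nonempty finite word $u$, $p_u\in\{0,1\}^{\mathbb Z}$ is defined by $(p_u)_i=u_{i\bmod |u|}$. For a finite word $x$, $p_u[x]$ is the configuration equal to $x$ on positions $0,\dots,|x|-1$ and to $p_u$ elsewhere. $\textsc{SInv}_{F,u}$ is the decision problem: on input a finite word $x$, decide whether there is an integer $w$ such that for all $t\ge0$ the set of positions where $F^t(p_u)$ and $F^t(p_u[x])$ differ is contained in an interval of length $w$. For each $n$, it is regarded as a function $\{0,1\}^n\to\{0,1\}$. For a function $g:X\times Y\to Z$, $D(g)$ is the minimal depth of a deterministic two-party protocol computing $g$. In such a protocol, Alice knows $x$ and Bob knows $y$. The protocol is a binary tree: each internal node is labelled by a function of Alice's input only or of Bob's input only, with values in $\{\text{left},\text{right}\}$, and each leaf is labelled by an output value. For $g:\{0,1\}^m\to Z$, set $D(g)=\max_{0\le i<m}D(g_i)$, where $g_i:\{0,1\}^i\times\{0,1\}^{m-i}\to Z$ is $g_i(x,y)=g(xy)$.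 *)

theory Defs
  imports Main
begin

text \<open>Configurations over {0,1}, encoded as booleans (True = 1).\<close>
type_synonym config = "int \<Rightarrow> bool"

definition eca_local :: "nat \<Rightarrow> bool \<Rightarrow> bool \<Rightarrow> bool \<Rightarrow> bool" where
  "eca_local N a b c = odd (N div 2 ^ (4 * of_bool a + 2 * of_bool b + of_bool c))"

definition eca :: "nat \<Rightarrow> config \<Rightarrow> config" where
  "eca N x = (\<lambda>i. eca_local N (x (i - 1)) (x i) (x (i + 1)))"

definition per :: "bool list \<Rightarrow> config" where
  "per u = (\<lambda>i. u ! nat (i mod int (length u)))"

definition per_patch :: "bool list \<Rightarrow> bool list \<Rightarrow> config" where
  "per_patch u x = (\<lambda>i. if 0 \<le> i \<and> i < int (length x) then x ! nat i else per u i)"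

definition SInv :: "nat \<Rightarrow> bool list \<Rightarrow> bool list \<Rightarrow> bool" where
  "SInv N u x = (\<exists>w::nat. \<forall>t::nat. \<exists>a::int.
      {i. (eca N ^^ t) (per u) i \<noteq> (eca N ^^ t) (per_patch u x) i} \<subseteq> {a..<a + int w})"

datatype ('a, 'b, 'z) protocol =
    Leaf 'z
  | AliceNode "'a \<Rightarrow> bool" "('a, 'b, 'z) protocol" "('a, 'b, 'z) protocol"
  | BobNode "'b \<Rightarrow> bool" "('a, 'b, 'z) protocol" "('a, 'b, 'z) protocol"

fun run_prot :: "('a, 'b, 'z) protocol \<Rightarrow> 'a \<Rightarrow> 'b \<Rightarrow> 'z" where
  "run_prot (Leaf z) x y = z"
| "run_prot (AliceNode q l r) x y = (if q x then run_prot l x y else run_prot r x y)"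
| "run_prot (BobNode q l r) x y = (if q y then run_prot l x y else run_prot r x y)"

fun prot_depth :: "('a, 'b, 'z) protocol \<Rightarrow> nat" where
  "prot_depth (Leaf z) = 0"
| "prot_depth (AliceNode q l r) = Suc (max (prot_depth l) (prot_depth r))"
| "prot_depth (BobNode q l r) = Suc (max (prot_depth l) (prot_depth r))"

definition cc :: "'a set \<Rightarrow> 'b set \<Rightarrow> ('a \<Rightarrow> 'b \<Rightarrow> 'z) \<Rightarrow> nat" where
  "cc X Y g = (LEAST d. \<exists>P :: ('a, 'b, 'z) protocol.
      prot_depth P = d \<and> (\<forall>x\<in>X. \<forall>y\<in>Y. run_prot P x y = g x y))"

definition cc_word :: "(bool list \<Rightarrow> 'z) \<Rightarrow> nat \<Rightarrow> nat" where
  "cc_word g m = (if m = 0 then 0 else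
     Max ((\<lambda>i. cc {x. length x = i} {y. length y = m - i} (\<lambda>x y. g (x @ y))) ` {..<m}))"

end

theory Submission
  imports Defs
begin

(* Rule 104 outputs 1 exactly when two of the three neighbouring cells are 1.
   Hence a "wall" (two adjacent 0s) is preserved forever and shields each side of it from
   the other, while in the absence of walls a single differing cell always propagates
   outwards.  Since F^t(p_u) is periodic, either (A) some F^k(p_u) contains a wall, and
   then by periodicity it contains walls far to the left and right of the perturbation
   p_u[x]; these confine all differences, so SInv holds for every x; or (B) no F^t(p_u)
   contains a wall, and then the leftmost and rightmost differences move apart at speed 1,
   so SInv holds exactly when p_u[x] = p_u, i.e. when x matches p_u on 0..|x|-1.
   In both cases SInv(xy) has the form "p(x) and q(y)" (or is constant), which a
   two-round protocol computes for every cut point, so the complexity is at most 2. *)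

section \<open>General facts on elementary cellular automata\<close>

lemma eca_congr:
  assumes "c (i - 1) = d (i - 1)" "c i = d i" "c (i + 1) = d (i + 1)"
  shows "eca N c i = eca N d i"
  using assms by (simp add: eca_def)

lemma eca_translate: "eca N (\<lambda>i. c (i + p)) = (\<lambda>i. eca N c (i + p))"
  by (simp add: eca_def algebra_simps)

lemma eca_iterate_translate:
  "(eca N ^^ t) (\<lambda>i. c (i + p)) = (\<lambda>i. (eca N ^^ t) c (i + p))"
  by (induction t) (simp_all add: eca_translate)

lemma eca_iterate_periodic:
  assumes "\<And>i. c (i + p) = c i"
  shows "(eca N ^^ t) c (i + p) = (eca N ^^ t) c i"
proof -
  have "(eca N ^^ t) c (i + p) = (eca N ^^ t) (\<lambda>i. c (i + p)) i"
    by (simp add: eca_iterate_translate)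
  also have "\<dots> = (eca N ^^ t) c i"
    using assms by simp
  finally show ?thesis .
qed

lemma per_periodic: "per u (i + m * int (length u)) = per u i"
  by (simp add: per_def)

lemma light_cone:
  assumes "\<And>i. i < a \<or> b \<le> i \<Longrightarrow> c i = d i"
    and "i < a - int t \<or> b + int t \<le> i"
  shows "(eca N ^^ t) c i = (eca N ^^ t) d i"
  using assms(2)
proof (induction t arbitrary: i)
  case 0
  then show ?case using assms(1) by simp
next
  case (Suc t)
  have "(eca N ^^ t) c k = (eca N ^^ t) d k" if "k \<in> {i - 1, i, i + 1}" for k
    using that Suc.prems by (intro Suc.IH) auto
  then show ?case
    unfolding funpow.simps comp_apply by (intro eca_congr) simp_all
qed

lemma funpow_pair_invariant:
  assumes "P c d" and "\<And>c d. P c d \<Longrightarrow> P (f c) (f d)"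
  shows "P ((f ^^ t) c) ((f ^^ t) d)"
  by (induction t) (simp_all add: assms)

section \<open>Dynamics of rule 104\<close>

lemma eca_local_104:
  "eca_local 104 a b c \<longleftrightarrow> (a \<and> b \<and> \<not> c) \<or> (a \<and> \<not> b \<and> c) \<or> (\<not> a \<and> b \<and> c)"
  by (cases a; cases b; cases c) (simp_all add: eca_local_def)

lemma eca_local_104_flip_right: "eca_local 104 a b c \<noteq> eca_local 104 a b (\<not> c) \<longleftrightarrow> a \<or> b"
  by (auto simp: eca_local_104)

lemma eca_local_104_flip_left: "eca_local 104 a b c \<noteq> eca_local 104 (\<not> a) b c \<longleftrightarrow> b \<or> c"
  by (auto simp: eca_local_104)

definition wall :: "config \<Rightarrow> int \<Rightarrow> bool" where
  "wall c j \<longleftrightarrow> \<not> c j \<and> \<not> c (j + 1)"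

lemma wall_step: "wall c j \<Longrightarrow> wall (eca 104 c) j"
  by (simp add: wall_def eca_def eca_local_104)

text \<open>A wall at \<open>j\<close> shields the cells up to \<open>j + 1\<close> from anything happening to its
  right: agreement there, together with the wall, is preserved by every step \<dots>\<close>
definition shielded_left :: "int \<Rightarrow> config \<Rightarrow> config \<Rightarrow> bool" where
  "shielded_left j c d \<longleftrightarrow> wall c j \<and> (\<forall>i \<le> j + 1. c i = d i)"

lemma shielded_left_step:
  assumes "shielded_left j c d"
  shows "shielded_left j (eca 104 c) (eca 104 d)"
proof -
  have wc: "wall c j" and wd: "wall d j" and agree: "\<forall>i \<le> j + 1. c i = d i"
    using assms by (auto simp: shielded_left_def wall_def)
  have "eca 104 c i = eca 104 d i" if "i \<le> j + 1" for i
  proof (cases "i < j")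
    case True
    then show ?thesis using agree by (intro eca_congr) auto
  next
    case False
    with that have "i = j \<or> i = j + 1" by linarith
    then show ?thesis using wall_step[OF wc] wall_step[OF wd] by (auto simp: wall_def)
  qed
  then show ?thesis using wall_step[OF wc] by (simp add: shielded_left_def)
qed

text \<open>\<dots> and symmetrically the cells from \<open>j\<close> on from anything happening to its left.\<close>
definition shielded_right :: "int \<Rightarrow> config \<Rightarrow> config \<Rightarrow> bool" where
  "shielded_right j c d \<longleftrightarrow> wall c j \<and> (\<forall>i \<ge> j. c i = d i)"

lemma shielded_right_step:
  assumes "shielded_right j c d"
  shows "shielded_right j (eca 104 c) (eca 104 d)"
proof -
  have wc: "wall c j" and wd: "wall d j" and agree: "\<forall>i \<ge> j. c i = d i"
    using assms by (auto simp: shielded_right_def wall_def)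
  have "eca 104 c i = eca 104 d i" if "i \<ge> j" for i
  proof (cases "i > j + 1")
    case True
    then show ?thesis using agree by (intro eca_congr) auto
  next
    case False
    with that have "i = j \<or> i = j + 1" by linarith
    then show ?thesis using wall_step[OF wc] wall_step[OF wd] by (auto simp: wall_def)
  qed
  then show ?thesis using wall_step[OF wc] by (simp add: shielded_right_def)
qed

lemma spread_left_step:
  assumes "\<forall>i < l. c i = d i" and "c l \<noteq> d l" and "\<not> wall c (l - 2)"
  shows "(\<forall>i < l - 1. eca 104 c i = eca 104 d i) \<and> eca 104 c (l - 1) \<noteq> eca 104 d (l - 1)"
proof
  have "c (l - 2) = d (l - 2)" "c (l - 1) = d (l - 1)" "d l = (\<not> c l)"
    using assms(1,2) by auto
  moreover have "c (l - 2) \<or> c (l - 1)" using assms(3) by (simp add: wall_def)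
  ultimately show "eca 104 c (l - 1) \<noteq> eca 104 d (l - 1)"
    using eca_local_104_flip_right by (simp add: eca_def)
  show "\<forall>i < l - 1. eca 104 c i = eca 104 d i"
    using assms(1) by (intro allI impI eca_congr) auto
qed

lemma spread_right_step:
  assumes "\<forall>i > r. c i = d i" and "c r \<noteq> d r" and "\<not> wall c (r + 1)"
  shows "(\<forall>i > r + 1. eca 104 c i = eca 104 d i) \<and> eca 104 c (r + 1) \<noteq> eca 104 d (r + 1)"
proof
  have "c (r + 2) = d (r + 2)" "c (r + 1) = d (r + 1)" "d r = (\<not> c r)"
    using assms(1,2) by auto
  moreover have "c (r + 1) \<or> c (r + 2)" using assms(3) by (simp add: wall_def add.assoc)
  ultimately show "eca 104 c (r + 1) \<noteq> eca 104 d (r + 1)"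
    using eca_local_104_flip_left by (simp add: eca_def add.assoc)
  show "\<forall>i > r + 1. eca 104 c i = eca 104 d i"
    using assms(1) by (intro allI impI eca_congr) auto
qed

lemma spread_left:
  assumes "\<forall>t j. \<not> wall ((eca 104 ^^ t) c) j"
    and "\<forall>i < l. c i = d i" and "c l \<noteq> d l"
  shows "(\<forall>i < l - int t. (eca 104 ^^ t) c i = (eca 104 ^^ t) d i)
         \<and> (eca 104 ^^ t) c (l - int t) \<noteq> (eca 104 ^^ t) d (l - int t)"
proof (induction t)
  case 0
  then show ?case using assms(2,3) by simp
next
  case (Suc t)
  then show ?case
    using spread_left_step[where l = "l - int t" and c = "(eca 104 ^^ t) c"] assms(1)
    by (simp add: algebra_simps)
qed

lemma spread_right:
  assumes "\<forall>t j. \<not> wall ((eca 104 ^^ t) c) j"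
    and "\<forall>i > r. c i = d i" and "c r \<noteq> d r"
  shows "(\<forall>i > r + int t. (eca 104 ^^ t) c i = (eca 104 ^^ t) d i)
         \<and> (eca 104 ^^ t) c (r + int t) \<noteq> (eca 104 ^^ t) d (r + int t)"
proof (induction t)
  case 0
  then show ?case using assms(2,3) by simp
next
  case (Suc t)
  then show ?case
    using spread_right_step[where r = "r + int t" and c = "(eca 104 ^^ t) c"] assms(1)
    by (simp add: algebra_simps)
qed

section \<open>The two cases of the dichotomy\<close>

lemma SInv_if_confined:
  assumes "\<And>t. {i. (eca N ^^ t) (per u) i \<noteq> (eca N ^^ t) (per_patch u x) i} \<subseteq> {l..r}"
  shows "SInv N u x"
  unfolding SInv_def
proof (intro exI allI)
  fix t
  have "{l..r} \<subseteq> {l..<l + int (nat (r - l + 1))}" by auto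
  then show "{i. (eca N ^^ t) (per u) i \<noteq> (eca N ^^ t) (per_patch u x) i}
      \<subseteq> {l..<l + int (nat (r - l + 1))}" using assms by blast
qed

lemma per_patch_outside: "i < 0 \<or> int (length x) \<le> i \<Longrightarrow> per u i = per_patch u x i"
  by (auto simp: per_patch_def)

lemma walls_confine:
  assumes "shielded_left jl c d" and "shielded_right jr c d" and "i \<le> jl + 1 \<or> jr \<le> i"
  shows "(eca 104 ^^ t) c i = (eca 104 ^^ t) d i"
proof -
  have "shielded_left jl ((eca 104 ^^ t) c) ((eca 104 ^^ t) d)"
    using assms(1) by (rule funpow_pair_invariant[where P = "shielded_left jl", OF _ shielded_left_step])
  moreover have "shielded_right jr ((eca 104 ^^ t) c) ((eca 104 ^^ t) d)"
    using assms(2) by (rule funpow_pair_invariant[where P = "shielded_right jr", OF _ shielded_right_step])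
  ultimately show ?thesis
    using assms(3) by (auto simp: shielded_left_def shielded_right_def)
qed

text \<open>By periodicity, a wall in \<open>F^k(p_u)\<close> recurs arbitrarily far to the left and right.\<close>
lemma walls_far_out:
  assumes u: "u \<noteq> []" and w: "wall ((eca 104 ^^ k) (per u)) j"
  obtains jl jr where "jl < A" "B < jr"
    "wall ((eca 104 ^^ k) (per u)) jl" "wall ((eca 104 ^^ k) (per u)) jr"
proof -
  define p where "p = int (length u)"
  have p: "p \<ge> 1" using u by (simp add: p_def Suc_le_eq)
  have walls: "wall ((eca 104 ^^ k) (per u)) (j + m * p)" for m
  proof -
    have "(eca 104 ^^ k) (per u) (i + m * p) = (eca 104 ^^ k) (per u) i" for i
      by (rule eca_iterate_periodic) (simp add: p_def per_periodic)
    from this[of j] this[of "j + 1"] show ?thesis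
      using w by (simp add: wall_def algebra_simps)
  qed
  define ml mr where "ml = \<bar>j\<bar> + \<bar>A\<bar> + 1" and "mr = \<bar>j\<bar> + \<bar>B\<bar> + 1"
  have "ml \<le> ml * p" "mr \<le> mr * p"
    using mult_left_mono[OF p] by (simp_all add: ml_def mr_def)
  then have "j + (- ml) * p < A" "B < j + mr * p"
    unfolding ml_def mr_def by linarith+
  then show thesis using walls that by blast
qed

lemma SInv_of_wall:
  assumes u: "u \<noteq> []" and w: "wall ((eca 104 ^^ k) (per u)) j"
  shows "SInv 104 u x"
proof -
  define P Q L where "P = per u" and "Q = per_patch u x" and "L = int (length x)"
  obtain jl jr where jl: "jl < - int k - 1" and jr: "L + int k - 1 < jr"
      and wl: "wall ((eca 104 ^^ k) P) jl" and wr: "wall ((eca 104 ^^ k) P) jr"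
    using walls_far_out[OF u w] unfolding P_def by blast
  have cone: "(eca 104 ^^ t) P i = (eca 104 ^^ t) Q i" if "i < - int t \<or> L + int t \<le> i" for t i
    unfolding P_def Q_def by (intro light_cone[OF per_patch_outside]) (use that in \<open>auto simp: L_def\<close>)
  have confined: "(eca 104 ^^ t) P i = (eca 104 ^^ t) Q i" if "i \<le> jl + 1 \<or> jr \<le> i" for t i
  proof (cases "k \<le> t")
    case True
    have "shielded_left jl ((eca 104 ^^ k) P) ((eca 104 ^^ k) Q)"
      unfolding shielded_left_def using wl jl by (simp add: cone)
    moreover have "shielded_right jr ((eca 104 ^^ k) P) ((eca 104 ^^ k) Q)"
      unfolding shielded_right_def using wr jr by (simp add: cone)
    ultimately have "(eca 104 ^^ (t - k)) ((eca 104 ^^ k) P) i = (eca 104 ^^ (t - k)) ((eca 104 ^^ k) Q) i"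
      using that by (rule walls_confine)
    then show ?thesis
      using True by (simp add: funpow_add[symmetric, THEN fun_cong, simplified comp_apply])
  next
    case False
    then show ?thesis using that jl jr by (intro cone) linarith
  qed
  have "{i. (eca 104 ^^ t) P i \<noteq> (eca 104 ^^ t) Q i} \<subseteq> {jl..jr}" for t
    using confined[of _ t] by fastforce
  then show ?thesis
    unfolding P_def Q_def by (rule SInv_if_confined)
qed

lemma extreme_differences:
  fixes c d :: config
  assumes fin: "finite {i. c i \<noteq> d i}" and ne: "c \<noteq> d"
  obtains l r where "l \<le> r" "c l \<noteq> d l" "\<forall>i < l. c i = d i" "c r \<noteq> d r" "\<forall>i > r. c i = d i"
proof -
  define D where "D = {i. c i \<noteq> d i}"
  have "finite D" "D \<noteq> {}" using fin ne by (auto simp: D_def)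
  then have min: "Min D \<in> D" and max: "Max D \<in> D" and "Min D \<le> Max D"
    and bounds: "\<And>i. i \<in> D \<Longrightarrow> Min D \<le> i \<and> i \<le> Max D"
    by simp_all
  show ?thesis
  proof (rule that[of "Min D" "Max D"])
    show "Min D \<le> Max D" by fact
    show "c (Min D) \<noteq> d (Min D)" "c (Max D) \<noteq> d (Max D)"
      using min max unfolding D_def by simp_all
    have "i \<notin> D" if "i < Min D \<or> i > Max D" for i
      using bounds[of i] that by linarith
    then show "\<forall>i < Min D. c i = d i" "\<forall>i > Max D. c i = d i"
      unfolding D_def by blast+
  qed
qed

lemma SInv_without_walls:
  assumes nowall: "\<forall>t j. \<not> wall ((eca 104 ^^ t) (per u)) j" and S: "SInv 104 u x"
  shows "per_patch u x = per u"
proof (rule ccontr)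
  assume "per_patch u x \<noteq> per u"
  then have ne: "per u \<noteq> per_patch u x" by simp
  have "{i. per u i \<noteq> per_patch u x i} \<subseteq> {0..<int (length x)}"
    by (auto simp: per_patch_def)
  then have "finite {i. per u i \<noteq> per_patch u x i}"
    by (rule finite_subset) simp
  then obtain l r where lr: "l \<le> r" and
      left: "per u l \<noteq> per_patch u x l" "\<forall>i < l. per u i = per_patch u x i" and
      right: "per u r \<noteq> per_patch u x r" "\<forall>i > r. per u i = per_patch u x i"
    using ne by (rule extreme_differences)
  from S obtain w :: nat and a where
    window: "{i. (eca 104 ^^ w) (per u) i \<noteq> (eca 104 ^^ w) (per_patch u x) i} \<subseteq> {a..<a + int w}"
    unfolding SInv_def by blast
  have "(eca 104 ^^ w) (per u) (l - int w) \<noteq> (eca 104 ^^ w) (per_patch u x) (l - int w)"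
    using spread_left[OF nowall left(2) left(1)] by blast
  then have "l - int w \<in> {a..<a + int w}" using window by blast
  moreover have "(eca 104 ^^ w) (per u) (r + int w) \<noteq> (eca 104 ^^ w) (per_patch u x) (r + int w)"
    using spread_right[OF nowall right(2) right(1)] by blast
  then have "r + int w \<in> {a..<a + int w}" using window by blast
  ultimately show False using lr by simp
qed

definition matches :: "bool list \<Rightarrow> int \<Rightarrow> bool list \<Rightarrow> bool" where
  "matches u s y \<longleftrightarrow> (\<forall>j < length y. y ! j = per u (s + int j))"

lemma per_patch_eq_iff: "per_patch u x = per u \<longleftrightarrow> matches u 0 x"
proof
  assume patch: "per_patch u x = per u"
  show "matches u 0 x"
    unfolding matches_def
  proof (intro allI impI)
    fix j assume "j < length x"
    then have "per_patch u x (int j) = x ! j" by (simp add: per_patch_def)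
    then show "x ! j = per u (0 + int j)" using patch by simp
  qed
next
  assume "matches u 0 x"
  then show "per_patch u x = per u"
    by (auto simp: matches_def per_patch_def nat_less_iff)
qed

lemma all_less_add_iff:
  fixes m n :: nat
  shows "(\<forall>j < m + n. P j) \<longleftrightarrow> (\<forall>j < m. P j) \<and> (\<forall>j < n. P (m + j))"
proof
  assume "\<forall>j < m + n. P j"
  then show "(\<forall>j < m. P j) \<and> (\<forall>j < n. P (m + j))" by simp
next
  assume parts: "(\<forall>j < m. P j) \<and> (\<forall>j < n. P (m + j))"
  show "\<forall>j < m + n. P j"
  proof (intro allI impI)
    fix j assume "j < m + n"
    then show "P j" using parts by (cases "j < m") (auto dest: spec[of _ "j - m"])
  qed
qed

lemma matches_append:
  "matches u s (xs @ ys) \<longleftrightarrow> matches u s xs \<and> matches u (s + int (length xs)) ys"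
  unfolding matches_def length_append all_less_add_iff by (simp add: nth_append add.assoc)

lemma SInv_104_dichotomy:
  assumes "u \<noteq> []"
  shows "(\<forall>x. SInv 104 u x) \<or> (\<forall>x. SInv 104 u x \<longleftrightarrow> matches u 0 x)"
proof (cases "\<exists>k j. wall ((eca 104 ^^ k) (per u)) j")
  case True
  then show ?thesis using SInv_of_wall[OF assms] by blast
next
  case False
  have "SInv 104 u x" if "per_patch u x = per u" for x
    using that by (intro SInv_if_confined[where l = 0 and r = "-1"]) auto
  then show ?thesis using False SInv_without_walls per_patch_eq_iff by blast
qed

section \<open>Communication complexity\<close>

lemma cc_le_depth:
  assumes "\<forall>x\<in>X. \<forall>y\<in>Y. run_prot P x y = g x y"
  shows "cc X Y g \<le> prot_depth P"
  unfolding cc_def using assms by (intro Least_le) blast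

lemma cc_const:
  assumes "\<forall>x\<in>X. \<forall>y\<in>Y. g x y = b"
  shows "cc X Y g = 0"
  using cc_le_depth[of X Y "Leaf b" g] assms by simp

lemma cc_conj:
  assumes "\<forall>x\<in>X. \<forall>y\<in>Y. g x y = (p x \<and> q y)"
  shows "cc X Y g \<le> 2"
proof -
  have "cc X Y g \<le> prot_depth (AliceNode p (BobNode q (Leaf True) (Leaf False)) (Leaf False))"
    using assms by (intro cc_le_depth) simp
  then show ?thesis by simp
qed

lemma cc_word_le:
  assumes "\<And>i. i < m \<Longrightarrow> cc {x. length x = i} {y. length y = m - i} (\<lambda>x y. g (x @ y)) \<le> C"
  shows "cc_word g m \<le> C"
  using assms unfolding cc_word_def by (auto intro!: Max.boundedI)

theorem mainTheorem16:
  shows "\<forall>u::bool list. u \<noteq> [] \<longrightarrow>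
           (\<exists>C::nat. \<forall>n::nat. cc_word (SInv 104 u) n \<le> C)"
proof (intro allI impI exI[of _ 2])
  fix u :: "bool list" and n :: nat
  assume u: "u \<noteq> []"
  show "cc_word (SInv 104 u) n \<le> 2"
  proof (rule cc_word_le)
    fix i
    let ?X = "{x. length x = i}" and ?Y = "{y. length y = n - i}"
    from SInv_104_dichotomy[OF u]
    show "cc ?X ?Y (\<lambda>x y. SInv 104 u (x @ y)) \<le> 2"
    proof
      assume "\<forall>x. SInv 104 u x"
      then show ?thesis
        using cc_const[where X = ?X and Y = ?Y and g = "\<lambda>x y. SInv 104 u (x @ y)" and b = True]
        by simp
    next
      assume "\<forall>x. SInv 104 u x \<longleftrightarrow> matches u 0 x"
      then show ?thesis
        by (intro cc_conj[where p = "matches u 0" and q = "matches u (int i)"])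
          (simp add: matches_append)
    qed
  qed
qed

end
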